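(* Let $0<\alpha<n$ and let $q(\cdot):\mathbb{R}^n\to(0,\infty)$ be measurable with $0<q_-\le q_+<\infty$. If $\omega\in\mathcal{W}_{q(\cdot)}$ and $\frac{1}{p(\cdot)}:=\frac{1}{q(\cdot)}+\frac{\alpha}{n}$, then $\omega\in\mathcal{W}_{p(\cdot)}$. Moreover, $s_{\omega,\,p(\cdot)}\le s_{\omega,\,q(\cdot)}+\frac{\alpha}{n}$.
   Context: For a measurable $p(\cdot):\mathbb{R}^n\to(0,\infty)$, $p_-=\operatorname{ess\,inf} p$, $p_+=\operatorname{ess\,sup} p$. A weight is a locally integrable $\omega$ with $0<\omega<\infty$ a.e. $\|f\|_{L^{p(\cdot)}_\omega}:=\|f\omega\|_{L^{p(\cdot)}}$, where $\|g\|_{L^{p(\cdot)}}=\inf\{\lambda>0:\int|g(x)/\lambda|^{p(x)}dx\le1\}$; $t'(\cdot)$ denotes the conjugate exponent of $t(\cdot)\ge1$; $M$ is the Hardy–Littlewood maximal operator. For $0<p_-\le p_+<\infty$, $\mathcal{W}_{p(\cdot)}$ is the set of weights $\omega$ such that: (i) there exists $0<p_\ast<\min\{1,p_-\}$ with $\|\chi_Q\|_{L^{p(\cdot)/p_\ast}_{\omega^{p_\ast}}}<\infty$ and $\|\chi_Q\|_{L^{(p(\cdot)/p_\ast)'}_{\omega^{-p_\ast}}}<\infty$ for all cubes $Q$; (ii) there exist $\kappa>1$ and $s>1$ such that $M$ is bounded on $L^{(sp(\cdot))'/\kappa}_{\omega^{-\kappa/s}}$. $s_{\omega,\,p(\cdot)}:=\inf\{s\ge1: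 M\text{ is bounded on }L^{(sp(\cdot))'}_{\omega^{-1/s}}\}$. *)

theory Defs
  imports "HOL-Analysis.Analysis"
begin

definition ess_inf :: "('a::euclidean_space \<Rightarrow> real) \<Rightarrow> ereal" where
  "ess_inf p = Sup {c::ereal. AE x in lebesgue. c \<le> ereal (p x)}"

definition ess_sup :: "('a::euclidean_space \<Rightarrow> real) \<Rightarrow> ereal" where
  "ess_sup p = Inf {c::ereal. AE x in lebesgue. ereal (p x) \<le> c}"

text \<open>Conjugate exponent t' = t/(t-1), with 1' = infinity (only used where t >= 1 a.e.).\<close>
definition conj_exp :: "real \<Rightarrow> ereal" where
  "conj_exp t = (if t \<le> 1 then \<infinity> else ereal (t / (t - 1)))"

definition phi_exp :: "ereal \<Rightarrow> ennreal \<Rightarrow> ennreal" where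
  "phi_exp r t = (if r = \<infinity> then (if t \<le> 1 then 0 else \<infinity>)
                  else if t = \<infinity> then \<infinity>
                  else ennreal (enn2real t powr real_of_ereal r))"

definition modular :: "('a::euclidean_space \<Rightarrow> ereal) \<Rightarrow> ('a \<Rightarrow> ennreal) \<Rightarrow> ennreal" where
  "modular r g = (\<integral>\<^sup>+ x. phi_exp (r x) (g x) \<partial>lebesgue)"

definition var_norm :: "('a::euclidean_space \<Rightarrow> ereal) \<Rightarrow> ('a \<Rightarrow> ennreal) \<Rightarrow> ennreal" where
  "var_norm r g = Inf {ennreal l | l. l > 0 \<and> modular r (\<lambda>x. g x / ennreal l) \<le> 1}"

definition wvar_norm :: "('a::euclidean_space \<Rightarrow> ereal) \<Rightarrow> ('a \<Rightarrow> real) \<Rightarrow> ('a \<Rightarrow> ennreal) \<Rightarrow> ennreal" where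
  "wvar_norm r w f = var_norm r (\<lambda>x. f x * ennreal (w x))"

definition is_cube :: "'a::euclidean_space set \<Rightarrow> bool" where
  "is_cube Q \<longleftrightarrow> (\<exists>a l. l > 0 \<and> Q = cbox a (a + l *\<^sub>R One))"

definition maxop :: "('a::euclidean_space \<Rightarrow> real) \<Rightarrow> 'a \<Rightarrow> ennreal" where
  "maxop f x = (SUP Q \<in> {Q. is_cube Q \<and> x \<in> Q}.
      (\<integral>\<^sup>+ y \<in> Q. ennreal \<bar>f y\<bar> \<partial>lebesgue) / emeasure lebesgue Q)"

definition M_bounded :: "('a::euclidean_space \<Rightarrow> ereal) \<Rightarrow> ('a \<Rightarrow> real) \<Rightarrow> bool" where
  "M_bounded r w \<longleftrightarrow> (\<exists>C::real. C \<ge> 0 \<and>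
     (\<forall>f \<in> borel_measurable lebesgue. wvar_norm r w (\<lambda>x. ennreal \<bar>f x\<bar>) < \<infinity> \<longrightarrow>
        wvar_norm r w (maxop f) \<le> ennreal C * wvar_norm r w (\<lambda>x. ennreal \<bar>f x\<bar>)))"

definition is_weight :: "('a::euclidean_space \<Rightarrow> real) \<Rightarrow> bool" where
  "is_weight w \<longleftrightarrow> w \<in> borel_measurable lebesgue \<and> (AE x in lebesgue. 0 < w x) \<and>
     (\<forall>K. compact K \<longrightarrow> set_integrable lebesgue K w)"

definition admissible_exp :: "('a::euclidean_space \<Rightarrow> real) \<Rightarrow> bool" where
  "admissible_exp p \<longleftrightarrow> p \<in> borel_measurable lebesgue \<and> (\<forall>x. 0 < p x) \<and>
     0 < ess_inf p \<and> ess_sup p < \<infinity>"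

definition W_class :: "('a::euclidean_space \<Rightarrow> real) \<Rightarrow> ('a \<Rightarrow> real) set" where
  "W_class p = {w. admissible_exp p \<and> is_weight w \<and>
     (\<exists>ps::real. 0 < ps \<and> ereal ps < min 1 (ess_inf p) \<and>
        (\<forall>Q. is_cube Q \<longrightarrow>
           wvar_norm (\<lambda>x. ereal (p x / ps)) (\<lambda>x. w x powr ps) (indicator Q) < \<infinity> \<and>
           wvar_norm (\<lambda>x. conj_exp (p x / ps)) (\<lambda>x. w x powr (- ps)) (indicator Q) < \<infinity>)) \<and>
     (\<exists>\<kappa>::real. \<kappa> > 1 \<and> (\<exists>s::real. s > 1 \<and> (AE x in lebesgue. 1 \<le> s * p x) \<and>
        M_bounded (\<lambda>x. conj_exp (s * p x) / ereal \<kappa>) (\<lambda>x. w x powr (- \<kappa> / s))))}"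

text \<open>The index s_{w,p(.)} (Inf of the empty set is infinity).\<close>
definition s_index :: "('a::euclidean_space \<Rightarrow> real) \<Rightarrow> ('a \<Rightarrow> real) \<Rightarrow> ereal" where
  "s_index w p = Inf {ereal s | s. s \<ge> 1 \<and> (AE x in lebesgue. 1 \<le> s * p x) \<and>
      M_bounded (\<lambda>x. conj_exp (s * p x)) (\<lambda>x. w x powr (- 1 / s))}"

end

theory Submission
  imports Defs
begin

text \<open>Write \<open>\<beta> = \<alpha>/n\<close>, so \<open>1/p = 1/q + \<beta>\<close>. Given \<open>q\<^sub>*\<close> for \<open>q\<close>, take \<open>p\<^sub>*\<close> with
  \<open>1/p\<^sub>* = 1/q\<^sub>* + \<beta>\<close>. Then \<open>p \<le> q\<close> gives \<open>w\<^sup>p \<le> 1 + w\<^sup>q\<close>, and the conjugate exponents satisfy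
  \<open>p\<^sub>* (p/p\<^sub>*)' = q\<^sub>* (q/q\<^sub>*)'\<close>, so both local integrability conditions pass from \<open>q\<close> to \<open>p\<close>
  (for bounded exponents, finiteness of a Luxemburg norm is finiteness of the modular).
  Since \<open>((s + \<beta>) p)' = (s q)' (s + \<beta>)/s\<close>, the maximal condition for \<open>(\<kappa>, s)\<close> and \<open>q\<close> is literally
  the one for \<open>(\<kappa> (s + \<beta>)/s, s + \<beta>)\<close> and \<open>p\<close>. For the index, Jensen's inequality
  \<open>(M f)\<^sup>t \<le> M (|f|\<^sup>t)\<close> shows that boundedness of \<open>M\<close> on \<open>L\<^sup>r\<close> with weight \<open>v\<^sup>t\<close> implies boundedness
  on \<open>L\<^sup>r\<^sup>t\<close> with weight \<open>v\<close>; with \<open>t = (s + \<beta>)/s\<close> this turns \<open>s\<close> for \<open>q\<close> into \<open>s + \<beta>\<close> for \<open>p\<close>.\<close>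

lemma powr_tangent_line_le:
  fixes y m t :: real
  assumes "1 \<le> t" "0 < m" "0 \<le> y"
  shows "m powr t + t * m powr (t - 1) * y \<le> y powr t + t * m powr (t - 1) * m"
proof (cases "y = 0")
  case True
  have "m powr t = m powr (t - 1) * m" using assms by (simp add: powr_diff)
  moreover have "m powr (t - 1) * m \<le> t * (m powr (t - 1) * m)"
    using assms by (intro mult_right_mono[of 1 t, simplified]) auto
  ultimately show ?thesis using True assms by (simp add: mult.assoc)
next
  case False
  then have "t * m powr (t - 1) * (y - m) \<le> y powr t - m powr t"
    using assms
    by (intro convex_on_imp_above_tangent[where A = "{0<..}"] powr_convex)
       (auto intro!: derivative_eq_intros simp: interior_open)
  then show ?thesis by (simp add: algebra_simps)
qed

lemma ennreal_divide_eq_mult_inverse: "0 < l \<Longrightarrow> a / ennreal l = a * ennreal (1 / l)"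
  by (metis divide_ennreal ennreal_1 ennreal_divide_times mult.right_neutral zero_le_one)

lemma ennreal_le_mult_Inf:
  fixes a c :: ennreal
  assumes "0 < c" "c < top" and "\<And>x. x \<in> S \<Longrightarrow> a \<le> c * x"
  shows "a \<le> c * Inf S"
proof -
  have "a / c \<le> Inf S"
  proof (rule Inf_greatest)
    fix x assume "x \<in> S"
    then have "a \<le> x * c" by (metis assms(3) mult.commute)
    then have "a / c \<le> (x * c) / c" by (rule divide_right_mono_ennreal)
    also have "\<dots> = x" by (rule ennreal_mult_divide_eq) (use assms in auto)
    finally show "a / c \<le> x" .
  qed
  then have "a / c * c \<le> Inf S * c" by (rule mult_right_mono) simp
  moreover have "a / c * c = a" using assms by (simp add: ennreal_divide_times)
  ultimately show ?thesis by (simp add: mult.commute)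
qed

lemma ereal_mult_divide_mult_cancel_right:
  fixes z :: ereal
  assumes "0 < a" "0 < \<kappa>" "0 \<le> z"
  shows "z * ereal a / ereal (\<kappa> * a) = z / ereal \<kappa>"
  using assms by (cases z) (auto simp: divide_ereal_def)

text \<open>Unlike \<open>nn_integral_cmult\<close>, no measurability of \<open>f\<close> is required: modulars integrate
  compositions with \<^const>\<open>phi_exp\<close> whose measurability is never established.\<close>

lemma nn_integral_cmult_le:
  fixes c :: real
  assumes "0 \<le> c"
  shows "(\<integral>\<^sup>+ x. ennreal c * f x \<partial>M) \<le> ennreal c * integral\<^sup>N M f"
proof (cases "c = 0")
  case False
  then have c: "0 < c" using assms by simp
  show ?thesis
    unfolding nn_integral_def[of M "\<lambda>x. ennreal c * f x"]
  proof (rule SUP_least)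
    fix g assume g: "g \<in> {g. simple_function M g \<and> g \<le> (\<lambda>x. ennreal c * f x)}"
    define h where "h = (\<lambda>x. g x / ennreal c)"
    have h: "simple_function M h"
      using g simple_function_compose1[of M g "\<lambda>y. y / ennreal c"] by (auto simp: h_def)
    have gh: "g = (\<lambda>x. ennreal c * h x)"
    proof
      fix x
      have "ennreal c * h x = g x * ennreal c / ennreal c"
        by (simp add: h_def ennreal_times_divide mult.commute)
      also have "\<dots> = g x" by (rule ennreal_mult_divide_eq) (use c in auto)
      finally show "g x = ennreal c * h x" by simp
    qed
    have "h \<le> f"
    proof (rule le_funI)
      fix x
      have "h x \<le> (f x * ennreal c) / ennreal c"
        using g unfolding h_def le_fun_def by (intro divide_right_mono_ennreal) (simp add: mult.commute)
      also have "\<dots> = f x" by (rule ennreal_mult_divide_eq) (use c in auto)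
      finally show "h x \<le> f x" .
    qed
    then have "integral\<^sup>S M h \<le> integral\<^sup>N M f"
      unfolding nn_integral_def using h by (intro SUP_upper) auto
    then show "integral\<^sup>S M g \<le> ennreal c * integral\<^sup>N M f"
      unfolding gh using h by (simp add: mult_left_mono)
  qed
qed simp

lemma set_nn_integral_const_plus:
  assumes "A \<in> sets M" "g \<in> borel_measurable M"
  shows "(\<integral>\<^sup>+ y \<in> A. (ennreal c + g y) \<partial>M) = ennreal c * emeasure M A + (\<integral>\<^sup>+ y \<in> A. g y \<partial>M)"
  using assms by (simp add: distrib_right nn_integral_add nn_integral_cmult_indicator)

lemma ess_inf_gtE:
  fixes q :: "'a::euclidean_space \<Rightarrow> real"
  assumes "ereal a < ess_inf q"
  obtains d where "a < d" "AE x in lebesgue. d \<le> q x"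
proof -
  obtain c where c: "AE x in lebesgue. c \<le> ereal (q x)" "ereal a < c"
    using assms unfolding ess_inf_def less_Sup_iff by blast
  define d where "d = (if c = \<infinity> then a + 1 else real_of_ereal c)"
  have d: "a < d" "ereal d \<le> c" using c(2) by (cases c; simp add: d_def)+
  have "AE x in lebesgue. d \<le> q x"
    using c(1) by eventually_elim (use d(2) in \<open>metis ereal_less_eq(3) order_trans\<close>)
  then show ?thesis using d(1) that by blast
qed

lemma ess_sup_finiteE:
  fixes q :: "'a::euclidean_space \<Rightarrow> real"
  assumes "ess_sup q < \<infinity>"
  obtains K where "AE x in lebesgue. q x \<le> K"
proof -
  obtain c where c: "AE x in lebesgue. ereal (q x) \<le> c" "c < \<infinity>"
    using assms unfolding ess_sup_def Inf_less_iff by blast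
  define K where "K = (if c = -\<infinity> then 0 else real_of_ereal c)"
  have cK: "c \<le> ereal K" using c(2) by (cases c) (auto simp: K_def)
  have "AE x in lebesgue. q x \<le> K"
    using c(1) by eventually_elim (use cK in \<open>metis ereal_less_eq(3) order_trans\<close>)
  then show ?thesis using that by blast
qed

lemma ess_inf_ge_if_AE:
  fixes p :: "'a::euclidean_space \<Rightarrow> real"
  shows "AE x in lebesgue. e \<le> p x \<Longrightarrow> ereal e \<le> ess_inf p"
  unfolding ess_inf_def by (rule Sup_upper) auto

lemma ess_sup_le_if_AE:
  fixes p :: "'a::euclidean_space \<Rightarrow> real"
  shows "AE x in lebesgue. p x \<le> e \<Longrightarrow> ess_sup p \<le> ereal e"
  unfolding ess_sup_def by (rule Inf_lower) auto

section \<open>Real powers of extended non-negative reals\<close>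

definition epow :: "ennreal \<Rightarrow> real \<Rightarrow> ennreal" where
  "epow a t = (if a = top then top else ennreal (enn2real a powr t))"

lemma epow_ennreal: "0 \<le> y \<Longrightarrow> epow (ennreal y) t = ennreal (y powr t)"
  by (simp add: epow_def)

lemma epow_top [simp]: "epow top t = top"
  by (simp add: epow_def)

lemma epow_1 [simp]: "epow a 1 = a"
  by (cases a) (auto simp: epow_def)

lemma epow_0 [simp]: "epow 0 t = 0"
  by (simp add: epow_def)

lemma epow_pos: "0 < a \<Longrightarrow> 0 < epow a t"
  by (cases a) (auto simp: epow_def)

lemma epow_mono:
  assumes "a \<le> b" "0 \<le> t"
  shows "epow a t \<le> epow b t"
proof (cases "b = top")
  case False
  then have "a \<noteq> top" using assms top_unique by fastforce
  then show ?thesis using False assms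
    by (auto simp: epow_def less_top[symmetric] intro!: ennreal_leI powr_mono2 enn2real_mono)
qed simp

lemma epow_epow: "0 < t \<Longrightarrow> epow (epow a s) t = epow a (s * t)"
  by (auto simp: epow_def powr_powr)

lemma epow_mult:
  assumes "0 < t"
  shows "epow (a * b) t = epow a t * epow b t"
proof (cases "a = top \<or> b = top")
  case True
  then show ?thesis
    using epow_pos[of a t] epow_pos[of b t]
    by (cases "a = 0"; cases "b = 0")
       (auto simp: ennreal_mult_eq_top_iff ennreal_top_mult ennreal_mult_top zero_less_iff_neq_zero)
next
  case False
  then obtain x y where "a = ennreal x" "b = ennreal y" "0 \<le> x" "0 \<le> y"
    by (metis ennreal_cases)
  then show ?thesis
    by (simp add: epow_def powr_mult ennreal_mult' ennreal_mult_eq_top_iff enn2real_mult)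
qed

lemma epow_divide:
  assumes "0 < t" "0 < l"
  shows "epow (a / ennreal l) t = epow a t / ennreal (l powr t)"
  using assms
  by (simp add: ennreal_divide_eq_mult_inverse epow_mult epow_ennreal powr_divide)

lemma epow_le_1_iff:
  assumes "0 < t"
  shows "epow a t \<le> 1 \<longleftrightarrow> a \<le> 1"
proof (cases "a = top")
  case False
  then obtain x where x: "a = ennreal x" "0 \<le> x" by (metis ennreal_cases)
  have "x powr t \<le> 1 \<longleftrightarrow> x \<le> 1"
  proof (cases "x \<le> 1")
    case True
    then show ?thesis using assms x(2) powr_le1[of t x] by simp
  next
    case False
    then show ?thesis using assms gr_one_powr[of x t] by linarith
  qed
  then show ?thesis using x by (simp add: epow_def)
qed simp

lemma phi_exp_ereal: "0 \<le> y \<Longrightarrow> phi_exp (ereal e) (ennreal y) = ennreal (y powr e)"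
  by (simp add: phi_exp_def)

lemma phi_exp_ereal_top: "phi_exp (ereal e) top = top"
  by (simp add: phi_exp_def)

lemma phi_exp_indicator_mult:
  "0 \<le> y \<Longrightarrow> phi_exp (ereal e) (indicator A x * ennreal y) = ennreal (y powr e) * indicator A x"
  by (cases "x \<in> A") (simp_all add: phi_exp_def)

lemma phi_exp_mult_exponent:
  assumes "0 \<le> r" "0 < t"
  shows "phi_exp (r * ereal t) a = phi_exp r (epow a t)"
proof (cases r)
  case (real e)
  then show ?thesis using assms by (auto simp: phi_exp_def epow_def powr_powr mult.commute)
next
  case PInf
  then show ?thesis using assms epow_le_1_iff[OF assms(2), of a] by (auto simp: phi_exp_def)
qed (use assms in simp)

lemma phi_exp_mono:
  assumes "0 \<le> r" "a \<le> b"
  shows "phi_exp r a \<le> phi_exp r b"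
proof (cases r)
  case (real e)
  then show ?thesis using assms epow_mono[OF assms(2), of e]
    by (auto simp: phi_exp_def epow_def split: if_splits)
qed (use assms in \<open>auto simp: phi_exp_def\<close>)

section \<open>Jensen's inequality for the maximal operator\<close>

lemma set_nn_integral_abs_le_powr:
  fixes f :: "'a \<Rightarrow> real"
  assumes "1 \<le> t" "A \<in> sets M" "f \<in> borel_measurable M"
  shows "(\<integral>\<^sup>+ y \<in> A. ennreal \<bar>f y\<bar> \<partial>M) \<le> emeasure M A + (\<integral>\<^sup>+ y \<in> A. ennreal (\<bar>f y\<bar> powr t) \<partial>M)"
proof -
  have "\<bar>f y\<bar> \<le> 1 + \<bar>f y\<bar> powr t" for y
  proof (cases "\<bar>f y\<bar> \<le> 1")
    case False
    then have "\<bar>f y\<bar> powr 1 \<le> \<bar>f y\<bar> powr t" using assms(1) by (intro powr_mono) auto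
    then show ?thesis using False by simp
  qed (use powr_ge_zero[of "\<bar>f y\<bar>" t] in linarith)
  then have "ennreal \<bar>f y\<bar> \<le> ennreal (1 + \<bar>f y\<bar> powr t)" for y
    by (rule ennreal_leI)
  then have "ennreal \<bar>f y\<bar> \<le> ennreal 1 + ennreal (\<bar>f y\<bar> powr t)" for y
    by (simp add: ennreal_plus)
  then have "(\<integral>\<^sup>+ y \<in> A. ennreal \<bar>f y\<bar> \<partial>M) \<le> (\<integral>\<^sup>+ y \<in> A. (ennreal 1 + ennreal (\<bar>f y\<bar> powr t)) \<partial>M)"
    by (intro nn_integral_mono mult_right_mono) auto
  also have "\<dots> = emeasure M A + (\<integral>\<^sup>+ y \<in> A. ennreal (\<bar>f y\<bar> powr t) \<partial>M)"
    using set_nn_integral_const_plus[OF assms(2), of _ 1] assms(3) by simp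
  finally show ?thesis .
qed

lemma set_nn_integral_powr_tangent_line:
  fixes f :: "'a \<Rightarrow> real"
  assumes "1 \<le> t" "0 < m" "A \<in> sets M" "f \<in> borel_measurable M"
  defines "c \<equiv> t * m powr (t - 1)"
  shows "ennreal (m powr t) * emeasure M A + ennreal c * (\<integral>\<^sup>+ y \<in> A. ennreal \<bar>f y\<bar> \<partial>M)
    \<le> ennreal (c * m) * emeasure M A + (\<integral>\<^sup>+ y \<in> A. ennreal (\<bar>f y\<bar> powr t) \<partial>M)"
proof -
  have c: "0 \<le> c" using assms by (simp add: c_def)
  have "(\<integral>\<^sup>+ y \<in> A. (ennreal (m powr t) + ennreal c * ennreal \<bar>f y\<bar>) \<partial>M)
      \<le> (\<integral>\<^sup>+ y \<in> A. (ennreal (c * m) + ennreal (\<bar>f y\<bar> powr t)) \<partial>M)"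
  proof (intro nn_integral_mono mult_right_mono)
    fix y
    have "m powr t + c * \<bar>f y\<bar> \<le> c * m + \<bar>f y\<bar> powr t"
      using powr_tangent_line_le[OF assms(1,2), of "\<bar>f y\<bar>"] by (simp add: c_def)
    then have "ennreal (m powr t + c * \<bar>f y\<bar>) \<le> ennreal (c * m + \<bar>f y\<bar> powr t)"
      by (rule ennreal_leI)
    then show "ennreal (m powr t) + ennreal c * ennreal \<bar>f y\<bar> \<le> ennreal (c * m) + ennreal (\<bar>f y\<bar> powr t)"
      using c assms(2) by (simp add: ennreal_plus ennreal_mult')
  qed simp
  moreover have "(\<integral>\<^sup>+ y \<in> A. ennreal c * ennreal \<bar>f y\<bar> \<partial>M) = ennreal c * (\<integral>\<^sup>+ y \<in> A. ennreal \<bar>f y\<bar> \<partial>M)"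
    using assms(3,4) by (subst nn_integral_cmult[symmetric]) (auto simp: mult.assoc)
  ultimately show ?thesis
    using assms(3,4) by (simp add: set_nn_integral_const_plus)
qed

lemma set_nn_integral_powr_ge_average:
  fixes f :: "'a \<Rightarrow> real"
  assumes t: "1 \<le> t" and m: "0 < m" and A: "A \<in> sets M" "emeasure M A = ennreal \<mu>" "0 < \<mu>"
    and f: "f \<in> borel_measurable M" and avg: "(\<integral>\<^sup>+ y \<in> A. ennreal \<bar>f y\<bar> \<partial>M) = ennreal (m * \<mu>)"
  shows "ennreal (m powr t * \<mu>) \<le> (\<integral>\<^sup>+ y \<in> A. ennreal (\<bar>f y\<bar> powr t) \<partial>M)"
proof -
  define c where "c = t * m powr (t - 1)"
  have c: "0 \<le> c" using t by (simp add: c_def)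
  have "ennreal (m powr t) * emeasure M A + ennreal c * ennreal (m * \<mu>)
      \<le> ennreal (c * m) * emeasure M A + (\<integral>\<^sup>+ y \<in> A. ennreal (\<bar>f y\<bar> powr t) \<partial>M)"
    using set_nn_integral_powr_tangent_line[OF t m A(1) f, folded c_def] avg by simp
  moreover have "ennreal (m powr t) * emeasure M A = ennreal (m powr t * \<mu>)"
    using A by (simp add: ennreal_mult)
  moreover have "ennreal c * ennreal (m * \<mu>) = ennreal (c * m * \<mu>)"
    "ennreal (c * m) * emeasure M A = ennreal (c * m * \<mu>)"
    using A c m by (simp_all add: ennreal_mult mult.assoc)
  ultimately have "ennreal (c * m * \<mu>) + ennreal (m powr t * \<mu>)
      \<le> ennreal (c * m * \<mu>) + (\<integral>\<^sup>+ y \<in> A. ennreal (\<bar>f y\<bar> powr t) \<partial>M)"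
    by (simp add: add.commute)
  then show ?thesis by (simp add: ennreal_add_left_cancel_le)
qed

text \<open>Jensen's inequality for averages, from the tangent line of \<open>y powr t\<close> at the average.\<close>

lemma set_nn_integral_average_powr_le:
  fixes f :: "'a \<Rightarrow> real"
  assumes t: "1 \<le> t" and A: "A \<in> sets M" "emeasure M A = ennreal \<mu>" "0 < \<mu>"
    and f: "f \<in> borel_measurable M"
  shows "(\<integral>\<^sup>+ y \<in> A. ennreal \<bar>f y\<bar> \<partial>M) / emeasure M A
    \<le> epow ((\<integral>\<^sup>+ y \<in> A. ennreal (\<bar>f y\<bar> powr t) \<partial>M) / emeasure M A) (1 / t)"
proof -
  define I1 where "I1 = (\<integral>\<^sup>+ y \<in> A. ennreal \<bar>f y\<bar> \<partial>M)"
  define It where "It = (\<integral>\<^sup>+ y \<in> A. ennreal (\<bar>f y\<bar> powr t) \<partial>M)"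
  show ?thesis
  proof (cases "It = top")
    case True
    then have "It / emeasure M A = top" using A by (simp add: ennreal_divide_eq_top_iff)
    then show ?thesis by (simp add: It_def)
  next
    case False
    have "I1 \<le> ennreal \<mu> + It"
      using set_nn_integral_abs_le_powr[OF t A(1) f] A(2) by (simp add: I1_def It_def)
    also have "\<dots> < top" using False by (simp add: less_top[symmetric])
    finally obtain J where J: "I1 = ennreal J" "0 \<le> J" by (metis ennreal_cases less_irrefl)
    define m where "m = J / \<mu>"
    have m0: "0 \<le> m" using J A by (simp add: m_def)
    have avg: "I1 / emeasure M A = ennreal m" using J A by (simp add: m_def divide_ennreal)
    show ?thesis
    proof (cases "m = 0")
      case True
      then have "I1 / emeasure M A = 0" using avg by simp
      then show ?thesis unfolding I1_def by (simp only: zero_le)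
    next
      case False
      then have m: "0 < m" using m0 by simp
      have "ennreal (m powr t * \<mu>) \<le> It"
        using set_nn_integral_powr_ge_average[OF t m A f] J A by (simp add: I1_def It_def m_def)
      then have "ennreal (m powr t) \<le> It / emeasure M A"
        using A m0 divide_right_mono_ennreal[of "ennreal (m powr t * \<mu>)" It "ennreal \<mu>"]
        by (simp add: divide_ennreal)
      then have "epow (ennreal (m powr t)) (1 / t) \<le> epow (It / emeasure M A) (1 / t)"
        using t by (intro epow_mono) auto
      moreover have "epow (ennreal (m powr t)) (1 / t) = ennreal m"
        using t m0 by (simp add: epow_ennreal powr_powr)
      ultimately show ?thesis using avg by (simp add: I1_def It_def)
    qed
  qed
qed

lemma is_cube_sets: "is_cube Q \<Longrightarrow> Q \<in> sets lebesgue"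
  by (auto simp: is_cube_def)

lemma is_cube_emeasure:
  assumes "is_cube Q"
  obtains \<mu> where "0 < \<mu>" "emeasure lebesgue Q = ennreal \<mu>"
proof -
  obtain a l where l: "0 < l" "Q = cbox a (a + l *\<^sub>R One)" using assms is_cube_def by blast
  have "measure lebesgue Q = (\<Prod>i\<in>(Basis::'a set). l)"
    using l by (simp add: content_cbox inner_simps algebra_simps)
  then have "0 < measure lebesgue Q" using l by simp
  moreover have "emeasure lebesgue Q = ennreal (measure lebesgue Q)"
    using l by (simp add: emeasure_eq_measure2)
  ultimately show ?thesis using that by blast
qed

lemma maxop_powr_le:
  fixes f :: "'a::euclidean_space \<Rightarrow> real"
  assumes t: "1 \<le> t" and f: "f \<in> borel_measurable lebesgue"
  shows "epow (maxop f x) t \<le> maxop (\<lambda>y. \<bar>f y\<bar> powr t) x"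
proof -
  have "maxop f x \<le> epow (maxop (\<lambda>y. \<bar>f y\<bar> powr t) x) (1 / t)"
    unfolding maxop_def[of f]
  proof (rule SUP_least)
    fix Q assume Q: "Q \<in> {Q. is_cube Q \<and> x \<in> Q}"
    then obtain \<mu> where "0 < \<mu>" "emeasure lebesgue Q = ennreal \<mu>"
      using is_cube_emeasure by blast
    then have "(\<integral>\<^sup>+ y \<in> Q. ennreal \<bar>f y\<bar> \<partial>lebesgue) / emeasure lebesgue Q
        \<le> epow ((\<integral>\<^sup>+ y \<in> Q. ennreal (\<bar>f y\<bar> powr t) \<partial>lebesgue) / emeasure lebesgue Q) (1 / t)"
      using Q is_cube_sets by (intro set_nn_integral_average_powr_le[OF t _ _ _ f]) auto
    also have "\<dots> \<le> epow (maxop (\<lambda>y. \<bar>f y\<bar> powr t) x) (1 / t)"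
      unfolding maxop_def using Q t by (intro epow_mono SUP_upper2[of Q]) auto
    finally show "(\<integral>\<^sup>+ y \<in> Q. ennreal \<bar>f y\<bar> \<partial>lebesgue) / emeasure lebesgue Q
        \<le> epow (maxop (\<lambda>y. \<bar>f y\<bar> powr t) x) (1 / t)" .
  qed
  then have "epow (maxop f x) t \<le> epow (epow (maxop (\<lambda>y. \<bar>f y\<bar> powr t) x) (1 / t)) t"
    using t by (intro epow_mono) auto
  also have "\<dots> = maxop (\<lambda>y. \<bar>f y\<bar> powr t) x" using t by (simp add: epow_epow)
  finally show ?thesis .
qed

section \<open>Modular and Luxemburg norm\<close>

lemma modular_mult_exponent:
  assumes "\<forall>x. 0 \<le> r x" "0 < t" "0 < l"
  shows "modular (\<lambda>x. r x * ereal t) (\<lambda>x. g x / ennreal l)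
    = modular r (\<lambda>x. epow (g x) t / ennreal (l powr t))"
  unfolding modular_def using assms by (simp add: phi_exp_mult_exponent epow_divide)

lemma modular_mono:
  assumes "\<forall>x. 0 \<le> r x" "\<And>x. g x \<le> h x"
  shows "modular r (\<lambda>x. g x / c) \<le> modular r (\<lambda>x. h x / c)"
  unfolding modular_def using assms
  by (intro nn_integral_mono phi_exp_mono divide_right_mono_ennreal) auto

lemma modular_divide_antimono:
  assumes "\<forall>x. 0 \<le> r x" "0 < l1" "l1 \<le> l2"
  shows "modular r (\<lambda>x. g x / ennreal l2) \<le> modular r (\<lambda>x. g x / ennreal l1)"
proof -
  have "g x / ennreal l2 \<le> g x / ennreal l1" for x
    using assms by (simp add: ennreal_divide_eq_mult_inverse mult_left_mono ennreal_leI frac_le)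
  then show ?thesis unfolding modular_def using assms(1)
    by (intro nn_integral_mono phi_exp_mono) auto
qed

lemma var_norm_le_if_modular_le_1:
  "0 < l \<Longrightarrow> modular r (\<lambda>x. g x / ennreal l) \<le> 1 \<Longrightarrow> var_norm r g \<le> ennreal l"
  unfolding var_norm_def by (rule Inf_lower) auto

lemma modular_le_1_if_var_norm_less:
  assumes "\<forall>x. 0 \<le> r x" "var_norm r g < ennreal \<mu>"
  shows "modular r (\<lambda>x. g x / ennreal \<mu>) \<le> 1"
proof -
  obtain l where l: "0 < l" "modular r (\<lambda>x. g x / ennreal l) \<le> 1" "ennreal l < ennreal \<mu>"
    using assms(2) unfolding var_norm_def Inf_less_iff by blast
  then have "l \<le> \<mu>" by (simp add: ennreal_less_iff)
  then show ?thesis using modular_divide_antimono[OF assms(1) l(1)] l(2) order_trans by blast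
qed

text \<open>For exponents bounded above, a finite Luxemburg norm forces a finite modular: dilating
  by \<open>\<Lambda> \<ge> 1\<close> multiplies the modular by at most \<open>\<Lambda> powr K\<close>.\<close>

lemma modular_finite_if_var_norm_finite:
  fixes r :: "'a::euclidean_space \<Rightarrow> ereal"
  assumes r: "AE x in lebesgue. r x = ereal (e x) \<and> 0 \<le> e x \<and> e x \<le> K"
    and fin: "var_norm r g < \<infinity>"
  shows "modular r g < \<infinity>"
proof -
  obtain l where l: "0 < l" "modular r (\<lambda>x. g x / ennreal l) \<le> 1"
    using fin unfolding var_norm_def Inf_less_iff by blast
  define \<Lambda> where "\<Lambda> = max 1 l"
  have \<Lambda>: "1 \<le> \<Lambda>" by (simp add: \<Lambda>_def)
  have "AE x in lebesgue. phi_exp (r x) (g x) \<le> ennreal (\<Lambda> powr K) * phi_exp (r x) (g x / ennreal l)"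
    using r
  proof eventually_elim
    case (elim x)
    show ?case
    proof (cases "g x = top")
      case True
      then show ?thesis using elim l \<Lambda> ennreal_divide_eq_top_iff[of top "ennreal l"]
        by (simp add: phi_exp_ereal_top ennreal_mult_top)
    next
      case False
      then obtain y where y: "g x = ennreal y" "0 \<le> y" by (metis ennreal_cases)
      have "l powr e x \<le> \<Lambda> powr K"
        using l elim \<Lambda> order_trans[OF powr_mono2[of "e x" l \<Lambda>] powr_mono[of "e x" K \<Lambda>]]
        by (simp add: \<Lambda>_def)
      then have "y powr e x \<le> \<Lambda> powr K * (y / l) powr e x"
        using l y by (simp add: powr_divide field_simps mult_right_mono)
      then show ?thesis using elim y l
        by (simp add: phi_exp_ereal divide_ennreal ennreal_mult[symmetric] ennreal_leI)
    qed
  qed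
  then have "modular r g \<le> (\<integral>\<^sup>+ x. ennreal (\<Lambda> powr K) * phi_exp (r x) (g x / ennreal l) \<partial>lebesgue)"
    unfolding modular_def by (rule nn_integral_mono_AE)
  also have "\<dots> \<le> ennreal (\<Lambda> powr K) * modular r (\<lambda>x. g x / ennreal l)"
    unfolding modular_def by (rule nn_integral_cmult_le) simp
  also have "\<dots> \<le> ennreal (\<Lambda> powr K)" using mult_left_mono[OF l(2)] by simp
  finally show ?thesis by (simp add: le_less_trans)
qed

lemma var_norm_finite_if_modular_finite:
  fixes r :: "'a::euclidean_space \<Rightarrow> ereal"
  assumes r: "AE x in lebesgue. r x = ereal (e x) \<and> c \<le> e x" and c: "0 < c"
    and fin: "modular r g < \<infinity>"
  shows "var_norm r g < \<infinity>"
proof -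
  obtain I where I: "modular r g = ennreal I" "0 \<le> I"
    using fin by (cases "modular r g") auto
  define l where "l = max 1 (I powr (1 / c))"
  have l: "1 \<le> l" by (simp add: l_def)
  have "I = (I powr (1 / c)) powr c" using c I(2) by (cases "I = 0") (auto simp: powr_powr)
  also have "\<dots> \<le> l powr c" using c by (intro powr_mono2) (auto simp: l_def)
  finally have I_le: "I \<le> l powr c" .
  have lc: "0 < l powr c" using l by simp
  have "AE x in lebesgue. phi_exp (r x) (g x / ennreal l) \<le> ennreal (1 / l powr c) * phi_exp (r x) (g x)"
    using r
  proof eventually_elim
    case (elim x)
    show ?case
    proof (cases "g x = top")
      case True
      then show ?thesis using elim l lc ennreal_divide_eq_top_iff[of top "ennreal l"]
        by (simp add: phi_exp_ereal_top ennreal_mult_top)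
    next
      case False
      then obtain y where y: "g x = ennreal y" "0 \<le> y" by (metis ennreal_cases)
      have "(y / l) powr e x = y powr e x / l powr e x" using l y by (simp add: powr_divide)
      also have "\<dots> \<le> y powr e x / l powr c"
        using l elim c lc by (intro divide_left_mono powr_mono) auto
      finally show ?thesis using elim y l
        by (simp add: phi_exp_ereal divide_ennreal ennreal_mult[symmetric] ennreal_leI)
    qed
  qed
  then have "modular r (\<lambda>x. g x / ennreal l) \<le> (\<integral>\<^sup>+ x. ennreal (1 / l powr c) * phi_exp (r x) (g x) \<partial>lebesgue)"
    unfolding modular_def by (rule nn_integral_mono_AE)
  also have "\<dots> \<le> ennreal (1 / l powr c) * ennreal I"
    using nn_integral_cmult_le[of "1 / l powr c" lebesgue "\<lambda>x. phi_exp (r x) (g x)"] I(1)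
    by (simp add: modular_def)
  also have "\<dots> \<le> 1"
    using I_le lc I(2) by (simp add: ennreal_mult[symmetric] ennreal_le_1 field_simps)
  finally have "var_norm r g \<le> ennreal l"
    using l by (intro var_norm_le_if_modular_le_1) auto
  then show ?thesis using le_less_trans by fastforce
qed

lemma M_bounded_mult_exponent:
  fixes r :: "'a::euclidean_space \<Rightarrow> ereal" and v v' :: "'a \<Rightarrow> real"
  assumes t: "1 \<le> t" and Mb: "M_bounded r v" and r: "\<forall>x. 0 \<le> r x"
    and v: "\<And>x. 0 \<le> v' x" "\<And>x. v x = v' x powr t"
  shows "M_bounded (\<lambda>x. r x * ereal t) v'"
proof -
  obtain C where C: "0 \<le> C" and H: "\<And>f. f \<in> borel_measurable lebesgue \<Longrightarrow>
      wvar_norm r v (\<lambda>x. ennreal \<bar>f x\<bar>) < \<infinity> \<Longrightarrow>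
      wvar_norm r v (maxop f) \<le> ennreal C * wvar_norm r v (\<lambda>x. ennreal \<bar>f x\<bar>)"
    using Mb unfolding M_bounded_def by blast
  define C' where "C' = (C + 1) powr (1 / t)"
  have C': "0 < C'" using C by (simp add: C'_def)
  have t0: "0 < t" using t by simp
  have v_epow: "epow (ennreal (v' x)) t = ennreal (v x)" for x
    using v by (simp add: epow_ennreal)
  have bound: "var_norm (\<lambda>x. r x * ereal t) (\<lambda>x. maxop f x * ennreal (v' x)) \<le> ennreal (C' * l)"
    if f: "f \<in> borel_measurable lebesgue" and l: "0 < l"
      and unit: "modular (\<lambda>x. r x * ereal t) (\<lambda>x. ennreal \<bar>f x\<bar> * ennreal (v' x) / ennreal l) \<le> 1"
    for f l
  proof -
    define F where "F = (\<lambda>y. \<bar>f y\<bar> powr t)"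
    have F: "F \<in> borel_measurable lebesgue" using f by (simp add: F_def)
    have "modular r (\<lambda>x. ennreal \<bar>F x\<bar> * ennreal (v x) / ennreal (l powr t)) \<le> 1"
      using unit modular_mult_exponent[OF r t0 l] t0
      by (simp add: epow_mult epow_ennreal v_epow F_def)
    then have norm_F: "wvar_norm r v (\<lambda>x. ennreal \<bar>F x\<bar>) \<le> ennreal (l powr t)"
      unfolding wvar_norm_def using l by (intro var_norm_le_if_modular_le_1) auto
    then have "wvar_norm r v (\<lambda>x. ennreal \<bar>F x\<bar>) < \<infinity>"
      using ennreal_less_top le_less_trans by (metis infinity_ennreal_def)
    then have "wvar_norm r v (maxop F) \<le> ennreal C * wvar_norm r v (\<lambda>x. ennreal \<bar>F x\<bar>)"
      by (rule H[OF F])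
    also have "\<dots> \<le> ennreal C * ennreal (l powr t)"
      by (rule mult_left_mono[OF norm_F]) simp
    also have "\<dots> < ennreal ((C' * l) powr t)"
      using C l t0 by (simp add: C'_def powr_mult powr_powr ennreal_mult[symmetric] ennreal_less_iff)
    finally have unit_F: "modular r (\<lambda>x. maxop F x * ennreal (v x) / ennreal ((C' * l) powr t)) \<le> 1"
      unfolding wvar_norm_def by (rule modular_le_1_if_var_norm_less[OF r])
    have "epow (maxop f x * ennreal (v' x)) t \<le> maxop F x * ennreal (v x)" for x
      using maxop_powr_le[OF t f] t0 by (simp add: epow_mult v_epow F_def mult_right_mono)
    then have "modular r (\<lambda>x. epow (maxop f x * ennreal (v' x)) t / ennreal ((C' * l) powr t))
        \<le> modular r (\<lambda>x. maxop F x * ennreal (v x) / ennreal ((C' * l) powr t))"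
      by (rule modular_mono[OF r])
    also note unit_F
    finally have "modular r (\<lambda>x. epow (maxop f x * ennreal (v' x)) t / ennreal ((C' * l) powr t)) \<le> 1" .
    then have "modular (\<lambda>x. r x * ereal t) (\<lambda>x. maxop f x * ennreal (v' x) / ennreal (C' * l)) \<le> 1"
      using modular_mult_exponent[OF r t0, of "C' * l"] C' l by simp
    then show ?thesis using C' l by (intro var_norm_le_if_modular_le_1) auto
  qed
  show ?thesis
    unfolding M_bounded_def
  proof (intro exI[of _ C'] conjI ballI impI)
    fix f :: "'a \<Rightarrow> real"
    assume "f \<in> borel_measurable lebesgue"
    then show "wvar_norm (\<lambda>x. r x * ereal t) v' (maxop f)
        \<le> ennreal C' * wvar_norm (\<lambda>x. r x * ereal t) v' (\<lambda>x. ennreal \<bar>f x\<bar>)"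
      unfolding wvar_norm_def var_norm_def using C' bound[unfolded var_norm_def]
      by (intro ennreal_le_mult_Inf) (auto simp: ennreal_mult)
  qed (use C' in simp)
qed

section \<open>The exponent shift\<close>

lemma conj_exp_nonneg: "0 \<le> conj_exp t"
  by (simp add: conj_exp_def)

lemma conj_exp_divide:
  fixes x ps :: real
  assumes "0 < ps" "ps < x"
  shows "conj_exp (x / ps) = ereal (x / (x - ps))"
  using assms by (simp add: conj_exp_def field_simps)

lemma inverse_shift_le_self:
  fixes x \<beta> :: real
  assumes "0 < x" "0 \<le> \<beta>"
  shows "1 / (1 / x + \<beta>) \<le> x"
proof -
  have "1 / (1 / x + \<beta>) \<le> 1 / (1 / x)"
    using assms by (intro divide_left_mono) (auto intro!: mult_pos_pos add_pos_nonneg divide_pos_pos)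
  then show ?thesis by simp
qed

lemma inverse_shift_mono:
  fixes d x \<beta> :: real
  assumes "0 < d" "d \<le> x" "0 \<le> \<beta>"
  shows "1 / (1 / d + \<beta>) \<le> 1 / (1 / x + \<beta>)"
proof -
  have "1 / x \<le> 1 / d" using assms by (simp add: frac_le)
  moreover have "0 < 1 / x + \<beta>" "0 < 1 / d + \<beta>" using assms by (auto intro: add_pos_nonneg)
  ultimately show ?thesis by (intro divide_left_mono) (auto intro: mult_pos_pos)
qed

lemma inverse_shift_strict_mono:
  fixes d x \<beta> :: real
  assumes "0 < d" "d < x" "0 \<le> \<beta>"
  shows "1 / (1 / d + \<beta>) < 1 / (1 / x + \<beta>)"
proof -
  have "1 / x < 1 / d" using assms by (simp add: frac_less2)
  moreover have "0 < 1 / x + \<beta>" "0 < 1 / d + \<beta>" using assms by (auto intro: add_pos_nonneg)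
  ultimately show ?thesis by (intro divide_strict_left_mono) (auto intro: mult_pos_pos)
qed

lemma one_le_mult_inverse_shift_iff:
  fixes q s \<beta> :: real
  assumes "0 < q" "0 < s" "0 \<le> \<beta>"
  shows "1 \<le> (s + \<beta>) * (1 / (1 / q + \<beta>)) \<longleftrightarrow> 1 \<le> s * q"
proof -
  have "0 < 1 / q + \<beta>" using assms by (intro add_pos_nonneg) auto
  then have "1 \<le> (s + \<beta>) * (1 / (1 / q + \<beta>)) \<longleftrightarrow> 1 / q \<le> s"
    by (simp add: le_divide_eq)
  also have "\<dots> \<longleftrightarrow> 1 \<le> s * q" using assms by (simp add: divide_le_eq mult.commute)
  finally show ?thesis .
qed

lemma conj_exp_mult_inverse_shift:
  fixes q s \<beta> :: real
  assumes q: "0 < q" and s: "0 < s" and \<beta>: "0 \<le> \<beta>"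
  shows "conj_exp ((s + \<beta>) * (1 / (1 / q + \<beta>))) = conj_exp (s * q) * ereal ((s + \<beta>) / s)"
proof -
  have D: "0 < 1 + \<beta> * q" using q \<beta> by (simp add: add_pos_nonneg)
  have p: "(s + \<beta>) * (1 / (1 / q + \<beta>)) = (s + \<beta>) * q / (1 + \<beta> * q)"
    using q D by (simp add: field_simps)
  have iff: "(s + \<beta>) * q / (1 + \<beta> * q) \<le> 1 \<longleftrightarrow> s * q \<le> 1"
    using D by (simp add: field_simps)
  have p1: "(s + \<beta>) * q / (1 + \<beta> * q) - 1 = (s * q - 1) / (1 + \<beta> * q)"
    using D by (simp add: field_simps)
  have "(s + \<beta>) * q / (1 + \<beta> * q) / ((s * q - 1) / (1 + \<beta> * q)) = (s + \<beta>) * q / (s * q - 1)"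
    using D by simp
  also have "\<dots> = s * q / (s * q - 1) * ((s + \<beta>) / s)"
    using s by simp
  finally show ?thesis
    using s \<beta> unfolding conj_exp_def p iff p1 by auto
qed

lemma admissible_exp_inverse_shift:
  assumes q: "admissible_exp q" and \<beta>: "0 < \<beta>" and p: "\<And>x. p x = 1 / (1 / q x + \<beta>)"
  shows "admissible_exp p"
proof -
  have q0: "0 < q x" for x using q by (simp add: admissible_exp_def)
  have p_eq: "p = (\<lambda>x. 1 / (1 / q x + \<beta>))" using p by auto
  obtain d where d: "0 < d" "AE x in lebesgue. d \<le> q x"
    using q ess_inf_gtE[of 0 q] by (auto simp: admissible_exp_def zero_ereal_def)
  have "AE x in lebesgue. 1 / (1 / d + \<beta>) \<le> p x"
    using d(2) by eventually_elim (use d(1) \<beta> in \<open>simp add: p inverse_shift_mono\<close>)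
  then have "ereal (1 / (1 / d + \<beta>)) \<le> ess_inf p" by (rule ess_inf_ge_if_AE)
  moreover have "0 < 1 / (1 / d + \<beta>)" using d(1) \<beta> by (simp add: add_pos_pos)
  ultimately have "0 < ess_inf p" by (metis ereal_less(2) order_less_le_trans)
  moreover have "p x \<le> 1 / \<beta>" for x
    unfolding p using q0[of x] \<beta> by (intro divide_left_mono) (auto intro!: add_pos_pos mult_pos_pos)
  then have "ess_sup p < \<infinity>" using ess_sup_le_if_AE[of p "1 / \<beta>"] by auto
  ultimately show ?thesis
    using q q0 \<beta> unfolding admissible_exp_def p_eq by (auto simp: add_pos_pos)
qed

lemma wvar_norm_indicator_powr_finite_smaller_exp:
  fixes p q w :: "'a::euclidean_space \<Rightarrow> real"
  assumes A: "A \<in> sets lebesgue" "emeasure lebesgue A < \<infinity>"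
    and w: "w \<in> borel_measurable lebesgue" "AE x in lebesgue. 0 < w x"
    and q: "q \<in> borel_measurable lebesgue" "AE x in lebesgue. q x \<le> K"
    and p: "\<And>x. 0 < p x" "\<And>x. p x \<le> q x"
    and ps: "0 < ps" "0 < ps'" "AE x in lebesgue. ps' \<le> p x"
    and fin: "wvar_norm (\<lambda>x. ereal (q x / ps)) (\<lambda>x. w x powr ps) (indicator A) < \<infinity>"
  shows "wvar_norm (\<lambda>x. ereal (p x / ps')) (\<lambda>x. w x powr ps') (indicator A) < \<infinity>"
proof -
  have q0: "0 < q x" for x using p[of x] by simp
  have "modular (\<lambda>x. ereal (q x / ps)) (\<lambda>x. indicator A x * ennreal (w x powr ps)) < \<infinity>"
    using fin unfolding wvar_norm_def
  proof (rule modular_finite_if_var_norm_finite[where e = "\<lambda>x. q x / ps" and K = "K / ps", rotated])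
    show "AE x in lebesgue. ereal (q x / ps) = ereal (q x / ps) \<and> 0 \<le> q x / ps \<and> q x / ps \<le> K / ps"
      using q(2) by eventually_elim (use ps q0 in \<open>auto intro: divide_right_mono less_imp_le\<close>)
  qed
  then have int_q: "(\<integral>\<^sup>+ x \<in> A. ennreal (w x powr q x) \<partial>lebesgue) < \<infinity>"
    using ps(1) by (simp add: modular_def phi_exp_indicator_mult powr_powr)
  have "AE x in lebesgue. phi_exp (ereal (p x / ps')) (indicator A x * ennreal (w x powr ps'))
      \<le> (ennreal 1 + ennreal (w x powr q x)) * indicator A x"
    using w(2)
  proof eventually_elim
    case (elim x)
    have "w x powr p x \<le> 1 + w x powr q x"
    proof (cases "w x \<le> 1")
      case True
      then have "w x powr p x \<le> 1" using elim p(1)[of x] by (intro powr_le1) auto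
      then show ?thesis using powr_ge_zero[of "w x" "q x"] by linarith
    next
      case False
      then have "w x powr p x \<le> w x powr q x" using p(2)[of x] by (intro powr_mono) auto
      then show ?thesis by linarith
    qed
    then have "ennreal (w x powr p x) \<le> ennreal (1 + w x powr q x)"
      by (rule ennreal_leI)
    then have "ennreal (w x powr p x) \<le> ennreal 1 + ennreal (w x powr q x)"
      by (simp add: ennreal_plus)
    then show ?case
      using ps(2) by (simp add: phi_exp_indicator_mult powr_powr mult_right_mono)
  qed
  then have "modular (\<lambda>x. ereal (p x / ps')) (\<lambda>x. indicator A x * ennreal (w x powr ps'))
      \<le> (\<integral>\<^sup>+ x \<in> A. (ennreal 1 + ennreal (w x powr q x)) \<partial>lebesgue)"
    unfolding modular_def by (rule nn_integral_mono_AE)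
  also have "\<dots> = emeasure lebesgue A + (\<integral>\<^sup>+ x \<in> A. ennreal (w x powr q x) \<partial>lebesgue)"
    using set_nn_integral_const_plus[OF A(1), of _ 1] w(1) q(1) by simp
  also have "\<dots> < \<infinity>" using A(2) int_q by (simp add: less_top[symmetric])
  finally show ?thesis
    unfolding wvar_norm_def
  proof (rule var_norm_finite_if_modular_finite[where e = "\<lambda>x. p x / ps'" and c = 1, rotated 2])
    show "AE x in lebesgue. ereal (p x / ps') = ereal (p x / ps') \<and> 1 \<le> p x / ps'"
      using ps(3) by eventually_elim (use ps(2) in \<open>simp add: le_divide_eq\<close>)
  qed simp
qed

text \<open>If \<open>1/ps' - 1/p = 1/ps - 1/q\<close>, the conjugate exponents satisfy
  \<open>ps' (p/ps')' = ps (q/ps)'\<close>, so the two modulars coincide.\<close>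

lemma wvar_norm_indicator_conj_finite_shift:
  fixes p q w :: "'a::euclidean_space \<Rightarrow> real"
  assumes ps: "0 < ps" "ps < d" "AE x in lebesgue. d \<le> q x"
    and ps': "0 < ps'" "AE x in lebesgue. ps' < p x"
    and shift: "\<And>x. 1 / ps' - 1 / p x = 1 / ps - 1 / q x"
    and fin: "wvar_norm (\<lambda>x. conj_exp (q x / ps)) (\<lambda>x. w x powr (- ps)) (indicator A) < \<infinity>"
  shows "wvar_norm (\<lambda>x. conj_exp (p x / ps')) (\<lambda>x. w x powr (- ps')) (indicator A) < \<infinity>"
proof -
  have conj_q: "AE x in lebesgue. conj_exp (q x / ps) = ereal (q x / (q x - ps))
      \<and> 0 \<le> q x / (q x - ps) \<and> q x / (q x - ps) \<le> d / (d - ps)"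
    using ps(3) by eventually_elim (use ps in \<open>simp add: conj_exp_divide field_simps mult_right_mono\<close>)
  have conj_p: "AE x in lebesgue. conj_exp (p x / ps') = ereal (p x / (p x - ps')) \<and> 1 \<le> p x / (p x - ps')"
    using ps'(2) by eventually_elim (use ps'(1) in \<open>simp add: conj_exp_divide le_divide_eq\<close>)
  have "modular (\<lambda>x. conj_exp (q x / ps)) (\<lambda>x. indicator A x * ennreal (w x powr - ps)) < \<infinity>"
    using modular_finite_if_var_norm_finite[OF conj_q] fin by (simp add: wvar_norm_def)
  moreover have "modular (\<lambda>x. conj_exp (p x / ps')) (\<lambda>x. indicator A x * ennreal (w x powr - ps'))
      = modular (\<lambda>x. conj_exp (q x / ps)) (\<lambda>x. indicator A x * ennreal (w x powr - ps))"
    unfolding modular_def using conj_q conj_p ps(3) ps'(2)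
  proof (intro nn_integral_cong_AE, eventually_elim)
    case (elim x)
    have "ps' * (p x / (p x - ps')) = 1 / (1 / ps' - 1 / p x)"
      using ps'(1) elim by (simp add: field_simps)
    also have "\<dots> = ps * (q x / (q x - ps))"
      using ps elim by (simp add: shift field_simps)
    finally show ?case using elim by (simp add: phi_exp_indicator_mult powr_powr)
  qed
  ultimately show ?thesis
    unfolding wvar_norm_def by (intro var_norm_finite_if_modular_finite[OF conj_p]) simp_all
qed

lemma W_class_cube_condition_inverse_shift:
  fixes p q w :: "'a::euclidean_space \<Rightarrow> real"
  assumes W: "w \<in> W_class q" and \<beta>: "0 < \<beta>" and p: "\<And>x. p x = 1 / (1 / q x + \<beta>)"
  shows "\<exists>ps. 0 < ps \<and> ereal ps < min 1 (ess_inf p) \<and>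
    (\<forall>Q. is_cube Q \<longrightarrow>
       wvar_norm (\<lambda>x. ereal (p x / ps)) (\<lambda>x. w x powr ps) (indicator Q) < \<infinity> \<and>
       wvar_norm (\<lambda>x. conj_exp (p x / ps)) (\<lambda>x. w x powr (- ps)) (indicator Q) < \<infinity>)"
proof -
  obtain ps where ps: "0 < ps" "ereal ps < min 1 (ess_inf q)"
    and cubes: "\<forall>Q. is_cube Q \<longrightarrow>
       wvar_norm (\<lambda>x. ereal (q x / ps)) (\<lambda>x. w x powr ps) (indicator Q) < \<infinity> \<and>
       wvar_norm (\<lambda>x. conj_exp (q x / ps)) (\<lambda>x. w x powr (- ps)) (indicator Q) < \<infinity>"
    using W unfolding W_class_def by blast
  have q: "q \<in> borel_measurable lebesgue" "\<And>x. 0 < q x" "ess_sup q < \<infinity>"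
    and w: "w \<in> borel_measurable lebesgue" "AE x in lebesgue. 0 < w x"
    using W by (auto simp: W_class_def admissible_exp_def is_weight_def)
  obtain K where K: "AE x in lebesgue. q x \<le> K" using ess_sup_finiteE[OF q(3)] .
  obtain d where d: "ps < d" "AE x in lebesgue. d \<le> q x" using ps(2) ess_inf_gtE[of ps q] by auto
  define ps' where "ps' = 1 / (1 / ps + \<beta>)"
  have ps': "0 < ps'" using ps \<beta> by (simp add: ps'_def add_pos_pos)
  have "ps' < 1" using ps \<beta> inverse_shift_le_self[of ps \<beta>] by (simp add: ps'_def)
  have p_le_q: "0 < p x \<and> p x \<le> q x" for x
    using q(2)[of x] \<beta> inverse_shift_le_self[of "q x" \<beta>] by (simp add: p add_pos_pos)
  have ps'_less: "ps' < 1 / (1 / d + \<beta>)"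
    unfolding ps'_def using ps(1) d(1) \<beta> by (intro inverse_shift_strict_mono) auto
  have p_ge: "AE x in lebesgue. 1 / (1 / d + \<beta>) \<le> p x"
    using d(2) by eventually_elim (use ps(1) d(1) \<beta> in \<open>simp add: p inverse_shift_mono\<close>)
  then have p_gt: "AE x in lebesgue. ps' < p x"
    by eventually_elim (use ps'_less in simp)
  have "ereal ps' < ereal (1 / (1 / d + \<beta>))" using ps'_less by simp
  also have "\<dots> \<le> ess_inf p" using p_ge by (rule ess_inf_ge_if_AE)
  finally have "ereal ps' < ess_inf p" .
  have "wvar_norm (\<lambda>x. ereal (p x / ps')) (\<lambda>x. w x powr ps') (indicator Q) < \<infinity> \<and>
     wvar_norm (\<lambda>x. conj_exp (p x / ps')) (\<lambda>x. w x powr (- ps')) (indicator Q) < \<infinity>"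
    if Q: "is_cube Q" for Q
  proof
    obtain \<mu> where "emeasure lebesgue Q = ennreal \<mu>" using is_cube_emeasure[OF Q] by blast
    then show "wvar_norm (\<lambda>x. ereal (p x / ps')) (\<lambda>x. w x powr ps') (indicator Q) < \<infinity>"
      using cubes Q p_le_q p_gt
      by (intro wvar_norm_indicator_powr_finite_smaller_exp[OF is_cube_sets[OF Q] _ w q(1) K _ _ ps(1) ps'])
         (auto elim: eventually_mono)
    show "wvar_norm (\<lambda>x. conj_exp (p x / ps')) (\<lambda>x. w x powr (- ps')) (indicator Q) < \<infinity>"
      using cubes Q
      by (intro wvar_norm_indicator_conj_finite_shift[OF ps(1) d ps' p_gt]) (auto simp: ps'_def p)
  qed
  then show ?thesis using ps' \<open>ps' < 1\<close> \<open>ereal ps' < ess_inf p\<close> by auto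
qed

lemma W_class_maximal_condition_inverse_shift:
  fixes p q w :: "'a::euclidean_space \<Rightarrow> real"
  assumes W: "w \<in> W_class q" and \<beta>: "0 < \<beta>" and p: "\<And>x. p x = 1 / (1 / q x + \<beta>)"
  shows "\<exists>\<kappa>>1. \<exists>s>1. (AE x in lebesgue. 1 \<le> s * p x) \<and>
    M_bounded (\<lambda>x. conj_exp (s * p x) / ereal \<kappa>) (\<lambda>x. w x powr (- \<kappa> / s))"
proof -
  obtain \<kappa> s where \<kappa>: "1 < \<kappa>" and s: "1 < s" "AE x in lebesgue. 1 \<le> s * q x"
    and M: "M_bounded (\<lambda>x. conj_exp (s * q x) / ereal \<kappa>) (\<lambda>x. w x powr (- \<kappa> / s))"
    using W unfolding W_class_def by blast
  have q: "0 < q x" for x using W by (simp add: W_class_def admissible_exp_def)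
  have s0: "0 < s" using s by simp
  have a: "1 \<le> (s + \<beta>) / s" using s0 \<beta> by simp
  \<comment> \<open>Scaling \<open>(s, \<kappa>)\<close> by \<open>(s + \<beta>) / s\<close> changes neither the exponent nor the weight.\<close>
  have "conj_exp ((s + \<beta>) * p x) = conj_exp (s * q x) * ereal ((s + \<beta>) / s)" for x
    unfolding p by (rule conj_exp_mult_inverse_shift) (use q s \<beta> in auto)
  then have "conj_exp ((s + \<beta>) * p x) / ereal (\<kappa> * ((s + \<beta>) / s)) = conj_exp (s * q x) / ereal \<kappa>" for x
    using ereal_mult_divide_mult_cancel_right[of "(s + \<beta>) / s" \<kappa> "conj_exp (s * q x)"] a \<kappa>
    by (simp add: conj_exp_nonneg)
  moreover have "- (\<kappa> * ((s + \<beta>) / s)) / (s + \<beta>) = - \<kappa> / s" using s0 \<beta> by simp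
  moreover have "AE x in lebesgue. 1 \<le> (s + \<beta>) * p x"
    using s(2) by eventually_elim (use \<beta> in \<open>simp only: p one_le_mult_inverse_shift_iff[OF q s0]\<close>)
  moreover have "1 < \<kappa> * ((s + \<beta>) / s)"
    using \<kappa> mult_left_mono[OF a, of \<kappa>] by simp
  ultimately show ?thesis
    using M s \<beta> by (intro exI[of _ "\<kappa> * ((s + \<beta>) / s)"] conjI exI[of _ "s + \<beta>"]) auto
qed

lemma W_class_inverse_shift:
  fixes p q w :: "'a::euclidean_space \<Rightarrow> real"
  assumes W: "w \<in> W_class q" and \<beta>: "0 < \<beta>" and p: "\<And>x. p x = 1 / (1 / q x + \<beta>)"
  shows "w \<in> W_class p"
proof -
  have "admissible_exp p" "is_weight w"
    using W admissible_exp_inverse_shift[OF _ \<beta> p] by (auto simp: W_class_def)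
  then show ?thesis
    using W_class_cube_condition_inverse_shift[OF assms] W_class_maximal_condition_inverse_shift[OF assms]
    unfolding W_class_def by blast
qed

lemma s_index_inverse_shift_le:
  fixes p q w :: "'a::euclidean_space \<Rightarrow> real"
  assumes q: "\<And>x. 0 < q x" and \<beta>: "0 \<le> \<beta>" and p: "\<And>x. p x = 1 / (1 / q x + \<beta>)"
  shows "s_index w p \<le> s_index w q + ereal \<beta>"
proof -
  let ?S = "\<lambda>p. {ereal s | s. 1 \<le> s \<and> (AE x in lebesgue. 1 \<le> s * p x) \<and>
      M_bounded (\<lambda>x. conj_exp (s * p x)) (\<lambda>x. w x powr (- 1 / s))}"
  have shift_mem: "ereal (s + \<beta>) \<in> ?S p"
    if s: "1 \<le> s" "AE x in lebesgue. 1 \<le> s * q x"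
      and M: "M_bounded (\<lambda>x. conj_exp (s * q x)) (\<lambda>x. w x powr (- 1 / s))" for s
  proof -
    have s0: "0 < s" using s by simp
    have "1 \<le> (s + \<beta>) / s" using s0 \<beta> by simp
    moreover have "w x powr (- 1 / s) = (w x powr (- 1 / (s + \<beta>))) powr ((s + \<beta>) / s)" for x
      using s0 \<beta> by (simp add: powr_powr)
    ultimately have "M_bounded (\<lambda>x. conj_exp (s * q x) * ereal ((s + \<beta>) / s)) (\<lambda>x. w x powr (- 1 / (s + \<beta>)))"
      by (intro M_bounded_mult_exponent[OF _ M]) (auto simp: conj_exp_nonneg)
    moreover have "conj_exp (s * q x) * ereal ((s + \<beta>) / s) = conj_exp ((s + \<beta>) * p x)" for x
      unfolding p by (rule conj_exp_mult_inverse_shift[symmetric]) (use q s0 \<beta> in auto)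
    moreover have "AE x in lebesgue. 1 \<le> (s + \<beta>) * p x"
      using s(2) by eventually_elim (use \<beta> in \<open>simp only: p one_le_mult_inverse_shift_iff[OF q s0]\<close>)
    ultimately show ?thesis using s \<beta> by auto
  qed
  have "Inf (?S p) - ereal \<beta> \<le> Inf (?S q)"
  proof (rule Inf_greatest)
    fix z assume "z \<in> ?S q"
    then obtain s where "z = ereal s" "ereal (s + \<beta>) \<in> ?S p" using shift_mem by blast
    then have "Inf (?S p) \<le> z + ereal \<beta>" by (simp add: Inf_lower)
    then show "Inf (?S p) - ereal \<beta> \<le> z" by (simp add: ereal_minus_le)
  qed
  then show ?thesis unfolding s_index_def by (simp add: ereal_minus_le)
qed

theorem proposition3p1:
  fixes q w :: "'a::euclidean_space \<Rightarrow> real" and \<alpha> :: real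
  assumes "0 < \<alpha>" and "\<alpha> < real DIM('a)"
    and "q \<in> borel_measurable lebesgue" and "\<forall>x. 0 < q x"
    and "0 < ess_inf q" and "ess_sup q < \<infinity>"
    and "w \<in> W_class q"
  shows "w \<in> W_class (\<lambda>x. 1 / (1 / q x + \<alpha> / real DIM('a)))
    \<and> s_index w (\<lambda>x. 1 / (1 / q x + \<alpha> / real DIM('a)))
        \<le> s_index w q + ereal (\<alpha> / real DIM('a))"
proof -
  have \<beta>: "0 < \<alpha> / real DIM('a)" using assms(1) by simp
  show ?thesis
    using W_class_inverse_shift[OF assms(7) \<beta>] s_index_inverse_shift_le[of q "\<alpha> / real DIM('a)"] assms(4) \<beta>
    by simp
qed

end
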